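(* Let $n\ge 2$ and let $|\psi_1\rangle,|\psi_2\rangle\in S^{2n-1}$ be two non-equivalent quantum states, i.e. $|\psi_1\rangle\notin[|\psi_2\rangle]$. Then there exist $\varepsilon>0$ and a self-adjoint $n\times n$ matrix $H'$ with $\|H'\|_{HS}=1$ and $H'\neq I$ such that $$|\psi_1\rangle=e^{i\varepsilon H'}|\psi_2\rangle .$$ Moreover, neither $|\psi_1\rangle$ nor $|\psi_2\rangle$ is an eigenvector of $H'$.
   Context: $S^{2n-1}$ denotes the unit sphere of $\mathbb{C}^n$ with the standard inner product $\langle\cdot|\cdot\rangle$; its elements are (pure) quantum states. For $|\psi\rangle\in S^{2n-1}$ the equivalence class is $[|\psi\rangle]=\{e^{i\varrho}|\psi\rangle:\varrho\in\mathbb{R}\}$, and two states are equivalent if one lies in the equivalence class of the other. $\|\cdot\|_{HS}$ is the Hilbert–Schmidt norm. *)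

theory Defs
  imports "HOL-Analysis.Analysis"
begin

primrec matpow :: "complex^'n^'n \<Rightarrow> nat \<Rightarrow> complex^'n^'n" where
  "matpow A 0 = mat 1"
| "matpow A (Suc k) = A ** matpow A k"

definition mat_scale :: "complex \<Rightarrow> complex^'n^'n \<Rightarrow> complex^'n^'n" where
  "mat_scale c A = (\<chi> i j. c * A $ i $ j)"

definition mat_exp :: "complex^'n^'n \<Rightarrow> complex^'n^'n" where
  "mat_exp A = (\<Sum>k. (1 / fact k) *\<^sub>R matpow A k)"

definition hermitian :: "complex^'n^'n \<Rightarrow> bool" where
  "hermitian A \<longleftrightarrow> (\<forall>i j. A $ i $ j = cnj (A $ j $ i))"

definition hs_norm :: "complex^'n^'n \<Rightarrow> real" where
  "hs_norm A = sqrt (\<Sum>i\<in>UNIV. \<Sum>j\<in>UNIV. (cmod (A $ i $ j))\<^sup>2)"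

definition is_eigenvector :: "complex^'n^'n \<Rightarrow> complex^'n \<Rightarrow> bool" where
  "is_eigenvector A v \<longleftrightarrow> v \<noteq> 0 \<and> (\<exists>c. A *v v = c *s v)"

definition phase_class :: "complex^'n \<Rightarrow> (complex^'n) set" where
  "phase_class \<psi> = {exp (\<i> * complex_of_real \<rho>) *s \<psi> | \<rho>. True}"

end

theory Submission
  imports Defs
begin

text \<open>Write \<open>\<psi>1 = a \<psi>2 + b e2\<close> with \<open>e2 \<perp> \<psi>2\<close> a unit vector and \<open>b > 0\<close>; non-equivalence
  of the states is exactly \<open>b \<noteq> 0\<close>. On the plane spanned by \<open>\<psi>2, e2\<close> take the Hermitian
  involution \<open>G = \<tau> \<sigma>\<^sub>z - \<beta> \<sigma>\<^sub>y\<close> (zero on the orthogonal complement). Since \<open>G\<^sup>2\<close> is the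
  projection \<open>P\<close> onto the plane, the exponential series collapses to
  \<open>exp (i \<theta> G) = (1 - P) + cos \<theta> P + i sin \<theta> G\<close>, which maps \<open>\<psi>2\<close> to
  \<open>(cos \<theta> + i \<tau> sin \<theta>) \<psi>2 + \<beta> sin \<theta> e2\<close>; choosing \<open>cos \<theta> = Re a\<close>, \<open>\<tau> sin \<theta> = Im a\<close> and
  \<open>\<beta> sin \<theta> = b\<close> gives \<open>\<psi>1\<close>. Finally \<open>H = G / \<surd>2\<close> has Hilbert-Schmidt norm 1, and a direct
  computation shows that neither state is an eigenvector because \<open>b \<noteq> 0\<close>.\<close>

definition cinner :: "complex^'n \<Rightarrow> complex^'n \<Rightarrow> complex" where
  "cinner x y = (\<Sum>i\<in>UNIV. x$i * cnj (y$i))"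

lemma cinner_add_left: "cinner (x + y) z = cinner x z + cinner y z"
  by (simp add: cinner_def sum.distrib distrib_right)

lemma cinner_diff_left: "cinner (x - y) z = cinner x z - cinner y z"
  by (simp add: cinner_def sum_subtractf left_diff_distrib)

lemma cinner_scale_left: "cinner (c *s x) z = c * cinner x z"
  by (simp add: cinner_def sum_distrib_left mult.assoc)

lemma cinner_scale_right: "cinner x (c *s z) = cnj c * cinner x z"
  by (simp add: cinner_def sum_distrib_left mult_ac)

lemma cinner_commute: "cinner y x = cnj (cinner x y)"
  by (simp add: cinner_def mult.commute)

lemma cinner_self: "cinner x x = complex_of_real ((norm x)\<^sup>2)"
proof -
  have "(norm x)\<^sup>2 = (\<Sum>i\<in>UNIV. (cmod (x$i))\<^sup>2)"
    unfolding norm_vec_def L2_set_def by (simp add: sum_nonneg)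
  then show ?thesis
    by (simp add: cinner_def flip: complex_norm_square)
qed

lemma mat_scale_mult_vec: "mat_scale c A *v x = c *s (A *v x)"
  by (simp add: mat_scale_def matrix_vector_mult_def vec_eq_iff sum_distrib_left mult_ac)

lemma mat_scale_mult_left: "mat_scale c A ** B = mat_scale c (A ** B)"
  by (simp add: mat_scale_def matrix_matrix_mult_def vec_eq_iff sum_distrib_left mult_ac)

lemma mat_scale_mult_right: "A ** mat_scale c B = mat_scale c (A ** B)"
  by (simp add: mat_scale_def matrix_matrix_mult_def vec_eq_iff sum_distrib_left mult_ac)

lemma mat_scale_mat_scale: "mat_scale c (mat_scale d A) = mat_scale (c * d) A"
  by (simp add: mat_scale_def mult.assoc)

lemma mat_scale_scaleR: "mat_scale c (r *\<^sub>R A) = mat_scale (c * complex_of_real r) A"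
  unfolding mat_scale_def vec_eq_iff by simp (simp add: scaleR_conv_of_real)

lemma mat_scale_of_real: "mat_scale (complex_of_real r) A = r *\<^sub>R A"
  unfolding mat_scale_def vec_eq_iff by simp (simp add: scaleR_conv_of_real)

lemma scaleR_mult_vec: "(r *\<^sub>R A) *v x = complex_of_real r *s (A *v x)"
  unfolding matrix_vector_mult_def vec_eq_iff
  by simp (simp add: scaleR_conv_of_real sum_distrib_left mult.assoc)

lemma hs_norm_scaleR: "hs_norm (r *\<^sub>R A) = \<bar>r\<bar> * hs_norm A"
proof -
  have "(\<Sum>i\<in>UNIV. \<Sum>j\<in>UNIV. (cmod ((r *\<^sub>R A) $ i $ j))\<^sup>2)
      = r\<^sup>2 * (\<Sum>i\<in>UNIV. \<Sum>j\<in>UNIV. (cmod (A $ i $ j))\<^sup>2)"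
    by (simp add: power_mult_distrib sum_distrib_left)
  then show ?thesis
    by (simp add: hs_norm_def real_sqrt_mult)
qed

lemma hermitian_scaleR: "hermitian A \<Longrightarrow> hermitian (r *\<^sub>R A)"
  unfolding hermitian_def by (metis complex_cnj_scaleR vector_scaleR_component)

lemma is_eigenvector_scaleR:
  assumes "r \<noteq> 0"
  shows "is_eigenvector (r *\<^sub>R A) v \<longleftrightarrow> is_eigenvector A v"
proof -
  have "(r *\<^sub>R A) *v v = c *s v \<longleftrightarrow> A *v v = (c / complex_of_real r) *s v" for c
    using assms by (auto simp: scaleR_mult_vec vec_eq_iff field_simps)
  then show ?thesis
    unfolding is_eigenvector_def by (metis nonzero_mult_div_cancel_left of_real_eq_0_iff assms)
qed

lemma matpow_rotation_generator:
  fixes K P :: "complex^'n^'n"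
  assumes KK: "K ** K = - (\<theta>^2) *\<^sub>R P" and KP: "K ** P = K" and "\<theta> \<noteq> 0"
  shows "matpow K k = (if k = 0 then mat 1 - P else 0)
    + (fact k * cos_coeff k * \<theta>^k) *\<^sub>R P + (fact k * sin_coeff k * \<theta>^k / \<theta>) *\<^sub>R K"
proof (induction k)
  case 0
  show ?case by simp
next
  case (Suc k)
  have "K ** (mat 1 - P) + K = K"
    using matrix_add_ldistrib[of K "mat 1 - P" P] KP by simp
  then have K_ann: "K ** (if k = 0 then mat 1 - P else 0) = 0"
    by simp
  have "matpow K (Suc k) = (fact k * cos_coeff k * \<theta>^k) *\<^sub>R K
      - (fact k * sin_coeff k * \<theta>^k / \<theta> * \<theta>^2) *\<^sub>R P"
    by (simp add: Suc.IH matrix_add_ldistrib K_ann matrix_scalar_ac scalar_matrix_assoc[symmetric]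
        KP KK)
  moreover have "fact (Suc k) * cos_coeff (Suc k) * \<theta>^Suc k
      = - (fact k * sin_coeff k * \<theta>^k / \<theta> * \<theta>^2)"
    using \<open>\<theta> \<noteq> 0\<close> by (simp add: cos_coeff_Suc power2_eq_square)
  moreover have "fact (Suc k) * sin_coeff (Suc k) * \<theta>^Suc k / \<theta> = fact k * cos_coeff k * \<theta>^k"
    using \<open>\<theta> \<noteq> 0\<close> by (simp add: sin_coeff_Suc)
  ultimately show ?case by (simp add: algebra_simps)
qed

lemma mat_exp_rotation_generator:
  fixes K P :: "complex^'n^'n"
  assumes "K ** K = - (\<theta>^2) *\<^sub>R P" and "K ** P = K" and "\<theta> \<noteq> 0"
  shows "mat_exp K = (mat 1 - P) + cos \<theta> *\<^sub>R P + (sin \<theta> / \<theta>) *\<^sub>R K"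
proof -
  have terms: "(\<lambda>k. (1 / fact k) *\<^sub>R matpow K k) = (\<lambda>k. ((if k = 0 then mat 1 - P else 0)
      + (cos_coeff k * \<theta>^k) *\<^sub>R P) + (sin_coeff k * \<theta>^k / \<theta>) *\<^sub>R K)"
    by (simp add: matpow_rotation_generator[OF assms] scaleR_add_right fun_eq_iff)
  have "(\<lambda>k. ((if k = 0 then mat 1 - P else 0) + (cos_coeff k * \<theta>^k) *\<^sub>R P)
      + (sin_coeff k * \<theta>^k / \<theta>) *\<^sub>R K) sums ((mat 1 - P) + cos \<theta> *\<^sub>R P + (sin \<theta> / \<theta>) *\<^sub>R K)"
  proof (intro sums_add sums_scaleR_left sums_divide)
    show "(\<lambda>k. if k = 0 then mat 1 - P else 0) sums (mat 1 - P)"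
      using sums_single[of 0 "\<lambda>_. mat 1 - P"] by simp
    show "(\<lambda>k. cos_coeff k * \<theta>^k) sums cos \<theta>"
      using cos_converges[of \<theta>] by simp
    show "(\<lambda>k. sin_coeff k * \<theta>^k) sums sin \<theta>"
      using sin_converges[of \<theta>] by simp
  qed
  then show ?thesis
    unfolding mat_exp_def terms by (rule sums_unique[symmetric])
qed

text \<open>The operator with matrix \<open>((a, b), (c, d))\<close> in the basis \<open>e1, e2\<close> of their span and
  zero on its orthogonal complement (when \<open>e1, e2\<close> are orthonormal).\<close>
definition pair_op ::
    "complex^'n \<Rightarrow> complex^'n \<Rightarrow> complex \<Rightarrow> complex \<Rightarrow> complex \<Rightarrow> complex \<Rightarrow> complex^'n^'n" where
  "pair_op e1 e2 a b c d = (\<chi> i j. a * e1$i * cnj (e1$j) + b * e1$i * cnj (e2$j)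
     + c * e2$i * cnj (e1$j) + d * e2$i * cnj (e2$j))"

lemma pair_op_mult_vec:
  "pair_op e1 e2 a b c d *v x =
     (a * cinner x e1 + b * cinner x e2) *s e1 + (c * cinner x e1 + d * cinner x e2) *s e2"
  by (simp add: pair_op_def matrix_vector_mult_def cinner_def vec_eq_iff sum_distrib_left
      sum.distrib algebra_simps)

lemma hermitian_pair_op:
  assumes "cnj a = a" and "cnj d = d" and "cnj b = c"
  shows "hermitian (pair_op e1 e2 a b c d)"
proof -
  have "cnj c = b" using assms(3) by auto
  then show ?thesis
    using assms by (simp add: hermitian_def pair_op_def algebra_simps)
qed

locale orthonormal_pair =
  fixes e1 e2 :: "complex^'n"
  assumes cinner_e1_e1: "cinner e1 e1 = 1" and cinner_e2_e2: "cinner e2 e2 = 1"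
    and cinner_e1_e2: "cinner e1 e2 = 0"
begin

lemma cinner_e2_e1: "cinner e2 e1 = 0"
  using cinner_e1_e2 cinner_commute[of e2 e1] by simp

lemma cinner_combination_e1: "cinner (p *s e1 + q *s e2) e1 = p"
  by (simp add: cinner_add_left cinner_scale_left cinner_e1_e1 cinner_e2_e1)

lemma cinner_combination_e2: "cinner (p *s e1 + q *s e2) e2 = q"
  by (simp add: cinner_add_left cinner_scale_left cinner_e2_e2 cinner_e1_e2)

lemma cinner_combination:
  "cinner (p *s e1 + q *s e2) (r *s e1 + s *s e2) = p * cnj r + q * cnj s"
proof -
  have "cinner e1 (r *s e1 + s *s e2) = cnj r" and "cinner e2 (r *s e1 + s *s e2) = cnj s"
    by (metis cinner_commute cinner_combination_e1 cinner_combination_e2)+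
  then show ?thesis
    by (simp add: cinner_add_left cinner_scale_left)
qed

lemma combination_eq_iff:
  "p *s e1 + q *s e2 = p' *s e1 + q' *s e2 \<longleftrightarrow> p = p' \<and> q = q'"
  by (metis cinner_combination_e1 cinner_combination_e2)

lemma pair_op_mult_combination:
  "pair_op e1 e2 a b c d *v (p *s e1 + q *s e2) = (a * p + b * q) *s e1 + (c * p + d * q) *s e2"
  by (simp add: pair_op_mult_vec cinner_combination_e1 cinner_combination_e2)

lemma pair_op_mult_e1: "pair_op e1 e2 a b c d *v e1 = a *s e1 + c *s e2"
  using pair_op_mult_combination[of a b c d 1 0] by simp

lemma pair_op_comp:
  "pair_op e1 e2 a b c d ** pair_op e1 e2 a' b' c' d' =
     pair_op e1 e2 (a * a' + b * c') (a * b' + b * d') (c * a' + d * c') (c * b' + d * d')"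
proof (rule iffD2[OF matrix_eq], rule allI)
  fix x
  show "(pair_op e1 e2 a b c d ** pair_op e1 e2 a' b' c' d') *v x =
      pair_op e1 e2 (a * a' + b * c') (a * b' + b * d') (c * a' + d * c') (c * b' + d * d') *v x"
    unfolding matrix_vector_mul_assoc[symmetric]
    by (simp only: pair_op_mult_vec cinner_combination_e1 cinner_combination_e2)
      (simp add: vec_eq_iff algebra_simps)
qed

lemma pair_op_eigen_equations:
  assumes "pair_op e1 e2 a b c d *v (p *s e1 + q *s e2) = z *s (p *s e1 + q *s e2)"
  shows "a * p + b * q = z * p" and "c * p + d * q = z * q"
proof -
  have "z *s (p *s e1 + q *s e2) = (z * p) *s e1 + (z * q) *s e2"
    by (simp add: vec_eq_iff algebra_simps)
  with assms show "a * p + b * q = z * p" and "c * p + d * q = z * q"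
    by (simp_all only: pair_op_mult_combination combination_eq_iff)
qed

abbreviation proj :: "complex^'n^'n" where
  "proj \<equiv> pair_op e1 e2 1 0 0 1"

text \<open>The squared Hilbert-Schmidt norm of a Hermitian \<open>K\<close> is the trace of \<open>K\<^sup>2\<close>, here the
  dimension of the span.\<close>
lemma hs_norm_hermitian_involution:
  assumes herm: "hermitian K" and sq: "K ** K = proj"
  shows "hs_norm K = sqrt 2"
proof -
  have cnj_K: "cnj (K$i$j) = K$j$i" for i j
    using herm unfolding hermitian_def by (metis complex_cnj_cnj)
  have "complex_of_real (\<Sum>i\<in>UNIV. \<Sum>j\<in>UNIV. (cmod (K$i$j))\<^sup>2)
      = (\<Sum>i\<in>UNIV. \<Sum>j\<in>UNIV. K$i$j * cnj (K$i$j))"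
    by (simp flip: complex_norm_square)
  also have "\<dots> = (\<Sum>i\<in>UNIV. (K ** K)$i$i)"
    by (simp add: cnj_K matrix_matrix_mult_def)
  also have "\<dots> = cinner e1 e1 + cinner e2 e2"
    by (simp add: sq pair_op_def cinner_def sum.distrib)
  also have "\<dots> = complex_of_real 2"
    by (simp add: cinner_e1_e1 cinner_e2_e2)
  finally have "(\<Sum>i\<in>UNIV. \<Sum>j\<in>UNIV. (cmod (K$i$j))\<^sup>2) = 2"
    by (simp only: of_real_eq_iff)
  then show ?thesis
    by (simp add: hs_norm_def)
qed

text \<open>In the basis \<open>e1, e2\<close> this is \<open>\<tau> \<sigma>\<^sub>z - \<beta> \<sigma>\<^sub>y\<close>.\<close>
definition pair_generator :: "real \<Rightarrow> real \<Rightarrow> complex^'n^'n" where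
  "pair_generator \<tau> \<beta> = pair_op e1 e2 \<tau> (\<i> * \<beta>) (- \<i> * \<beta>) (- \<tau>)"

lemma hermitian_pair_generator: "hermitian (pair_generator \<tau> \<beta>)"
  unfolding pair_generator_def by (rule hermitian_pair_op) simp_all

lemma pair_generator_squared:
  assumes "\<tau>\<^sup>2 + \<beta>\<^sup>2 = 1"
  shows "pair_generator \<tau> \<beta> ** pair_generator \<tau> \<beta> = proj"
proof -
  have "complex_of_real \<tau> * \<tau> + \<i> * \<beta> * (- \<i> * \<beta>) = 1"
    using assms by (simp add: power2_eq_square algebra_simps flip: of_real_mult of_real_add)
  then show ?thesis
    unfolding pair_generator_def pair_op_comp by (simp add: algebra_simps)
qed

lemma pair_generator_mult_proj: "pair_generator \<tau> \<beta> ** proj = pair_generator \<tau> \<beta>"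
  unfolding pair_generator_def pair_op_comp by simp

lemma mat_exp_pair_generator_mult_e1:
  fixes \<tau> \<beta> \<theta> :: real
  assumes "\<tau>\<^sup>2 + \<beta>\<^sup>2 = 1" and "\<theta> \<noteq> 0"
  shows "mat_exp (mat_scale (\<i> * \<theta>) (pair_generator \<tau> \<beta>)) *v e1
    = (complex_of_real (cos \<theta>) + \<i> * complex_of_real (sin \<theta> * \<tau>)) *s e1
      + complex_of_real (sin \<theta> * \<beta>) *s e2"
proof -
  let ?K = "mat_scale (\<i> * \<theta>) (pair_generator \<tau> \<beta>)"
  have "?K ** ?K = mat_scale (complex_of_real (- (\<theta>\<^sup>2))) proj"
    by (simp add: mat_scale_mult_left mat_scale_mult_right pair_generator_squared[OF assms(1)]
        mat_scale_mat_scale power2_eq_square algebra_simps)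
  then have "?K ** ?K = - (\<theta>\<^sup>2) *\<^sub>R proj"
    by (simp only: mat_scale_of_real)
  moreover have "?K ** proj = ?K"
    by (simp add: mat_scale_mult_left pair_generator_mult_proj)
  ultimately have exp_K:
      "mat_exp ?K = (mat 1 - proj) + cos \<theta> *\<^sub>R proj + (sin \<theta> / \<theta>) *\<^sub>R ?K"
    using assms(2) by (rule mat_exp_rotation_generator)
  have proj_e1: "proj *v e1 = e1"
    by (simp add: pair_op_mult_e1)
  have "mat_exp ?K *v e1 = complex_of_real (cos \<theta>) *s e1
      + (complex_of_real (sin \<theta> / \<theta>) * (\<i> * \<theta>)) *s (pair_generator \<tau> \<beta> *v e1)"
    by (simp only: exp_K matrix_vector_mult_add_rdistrib matrix_vector_mult_diff_rdistrib
        scaleR_mult_vec mat_scale_mult_vec proj_e1 matrix_vector_mul_lid)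
      (simp add: vec_eq_iff)
  also have "\<dots> = (complex_of_real (cos \<theta>) + \<i> * complex_of_real (sin \<theta> * \<tau>)) *s e1
      + complex_of_real (sin \<theta> * \<beta>) *s e2"
    using assms(2)
    by (simp add: pair_generator_def pair_op_mult_e1 vec_eq_iff algebra_simps)
  finally show ?thesis .
qed

lemma pair_generator_not_eigenvector_e1:
  assumes "\<beta> \<noteq> 0"
  shows "\<not> is_eigenvector (pair_generator \<tau> \<beta>) e1"
proof
  assume "is_eigenvector (pair_generator \<tau> \<beta>) e1"
  then obtain z where "pair_generator \<tau> \<beta> *v (1 *s e1 + 0 *s e2) = z *s (1 *s e1 + 0 *s e2)"
    by (auto simp: is_eigenvector_def)
  then have "- \<i> * \<beta> = 0"
    unfolding pair_generator_def using pair_op_eigen_equations(2) by fastforce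
  with assms show False by simp
qed

lemma pair_generator_not_eigenvector_combination:
  fixes b s :: real
  assumes "(cmod a)\<^sup>2 + b\<^sup>2 = 1" and "b \<noteq> 0" and "s \<noteq> 0"
  shows "\<not> is_eigenvector (pair_generator (Im a / s) (b / s)) (a *s e1 + complex_of_real b *s e2)"
proof
  define \<tau> \<beta> where "\<tau> = Im a / s" and "\<beta> = b / s"
  assume "is_eigenvector (pair_generator \<tau> \<beta>) (a *s e1 + complex_of_real b *s e2)"
  then obtain z where eigen:
      "pair_op e1 e2 \<tau> (\<i> * \<beta>) (- \<i> * \<beta>) (- \<tau>) *v (a *s e1 + complex_of_real b *s e2)
        = z *s (a *s e1 + complex_of_real b *s e2)"
    by (auto simp: is_eigenvector_def pair_generator_def)
  have "\<tau> * a + \<i> * \<beta> * b = z * a" and "- \<i> * \<beta> * a - \<tau> * b = z * b"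
    using pair_op_eigen_equations[OF eigen] by simp_all
  then have "(\<tau> * a + \<i> * \<beta> * b) * b = (- \<i> * \<beta> * a - \<tau> * b) * a"
    by (simp only: mult_ac)
  then have "Im ((\<tau> * a + \<i> * \<beta> * b) * b) = Im ((- \<i> * \<beta> * a - \<tau> * b) * a)"
    by (rule arg_cong)
  then have "2 * \<tau> * b * Im a + \<beta> * (b\<^sup>2 + (Re a)\<^sup>2 - (Im a)\<^sup>2) = 0"
    by (simp add: power2_eq_square algebra_simps)
  moreover have "2 * \<tau> * b * Im a + \<beta> * (b\<^sup>2 + (Re a)\<^sup>2 - (Im a)\<^sup>2)
      = b / s * ((Re a)\<^sup>2 + (Im a)\<^sup>2 + b\<^sup>2)"
    unfolding \<tau>_def \<beta>_def using assms(3) by (simp add: power2_eq_square field_simps)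
  ultimately show False
    using assms by (simp add: cmod_power2)
qed

lemma exists_generator_rotating_e1:
  fixes b :: real
  assumes norm_eq: "(cmod a)\<^sup>2 + b\<^sup>2 = 1" and b_pos: "b > 0"
  shows "\<exists>\<epsilon> H. \<epsilon> > 0 \<and> hermitian H \<and> hs_norm H = 1
    \<and> a *s e1 + complex_of_real b *s e2 = mat_exp (mat_scale (\<i> * complex_of_real \<epsilon>) H) *v e1
    \<and> \<not> is_eigenvector H e1 \<and> \<not> is_eigenvector H (a *s e1 + complex_of_real b *s e2)"
proof -
  define \<theta> where "\<theta> = arccos (Re a)"
  define s where "s = sin \<theta>"
  define G where "G = pair_generator (Im a / s) (b / s)"
  have "(cmod a)\<^sup>2 \<le> 1"
    using norm_eq zero_le_power2[of b] by linarith
  then have Re_bound: "\<bar>Re a\<bar> \<le> 1"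
    using abs_Re_le_cmod[of a] by (simp add: abs_square_le_1)
  then have cos_\<theta>: "cos \<theta> = Re a" and s_eq: "s = sqrt (1 - (Re a)\<^sup>2)"
    by (auto simp: \<theta>_def s_def sin_arccos_abs)
  have s_sq: "s\<^sup>2 = (Im a)\<^sup>2 + b\<^sup>2"
    using Re_bound norm_eq by (simp add: s_eq abs_square_le_1 cmod_power2)
  have "s \<noteq> 0"
    using s_sq b_pos by (auto simp: add_nonneg_pos)
  then have s_pos: "s > 0"
    using Re_bound by (simp add: s_eq order_less_le abs_square_le_1)
  have "\<theta> \<ge> 0"
    using Re_bound by (simp add: \<theta>_def arccos_lbound)
  moreover have "\<theta> \<noteq> 0"
    using s_pos by (auto simp: s_def)
  ultimately have \<theta>_pos: "\<theta> > 0" by simp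
  have "(Im a / s)\<^sup>2 + (b / s)\<^sup>2 = s\<^sup>2 / s\<^sup>2"
    by (simp only: power_divide s_sq add_divide_distrib)
  then have unit: "(Im a / s)\<^sup>2 + (b / s)\<^sup>2 = 1"
    using s_pos by simp
  have "complex_of_real (cos \<theta>) + \<i> * complex_of_real (sin \<theta> * (Im a / s)) = a"
    using cos_\<theta> s_pos by (simp add: complex_eq_iff flip: s_def)
  moreover have "sin \<theta> * (b / s) = b"
    using s_pos by (simp flip: s_def)
  ultimately have
      "mat_exp (mat_scale (\<i> * complex_of_real \<theta>) G) *v e1 = a *s e1 + complex_of_real b *s e2"
    using mat_exp_pair_generator_mult_e1[OF unit \<open>\<theta> \<noteq> 0\<close>] by (simp only: G_def)
  moreover have "mat_scale (\<i> * complex_of_real (sqrt 2 * \<theta>)) ((1 / sqrt 2) *\<^sub>R G)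
      = mat_scale (\<i> * complex_of_real \<theta>) G"
    by (simp add: mat_scale_scaleR)
  moreover have "hs_norm ((1 / sqrt 2) *\<^sub>R G) = 1"
    using hs_norm_hermitian_involution[OF hermitian_pair_generator pair_generator_squared[OF unit]]
    by (simp add: hs_norm_scaleR G_def)
  moreover have "hermitian ((1 / sqrt 2) *\<^sub>R G)"
    by (simp add: G_def hermitian_scaleR hermitian_pair_generator)
  moreover have "\<not> is_eigenvector G e1"
    using b_pos s_pos by (simp add: G_def pair_generator_not_eigenvector_e1)
  moreover have "\<not> is_eigenvector G (a *s e1 + complex_of_real b *s e2)"
    using norm_eq b_pos s_pos by (simp add: G_def pair_generator_not_eigenvector_combination)
  \<comment> \<open>rescaling \<open>G\<close> by \<open>1 / \<surd>2\<close> normalises it, and \<open>\<epsilon> = \<surd>2 \<theta>\<close> compensates\<close>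
  ultimately show ?thesis
    using \<theta>_pos is_eigenvector_scaleR[of "1 / sqrt 2" G]
    by (intro exI[of _ "sqrt 2 * \<theta>"] exI[of _ "(1 / sqrt 2) *\<^sub>R G"]) auto
qed

end

lemma unit_multiple_in_phase_class:
  assumes "norm (c *s \<psi>) = 1" and "norm \<psi> = 1"
  shows "c *s \<psi> \<in> phase_class \<psi>"
proof -
  have "c * cnj c = cinner (c *s \<psi>) (c *s \<psi>)"
    using assms(2) by (simp only: cinner_scale_left cinner_scale_right) (simp add: cinner_self)
  also have "\<dots> = 1"
    using assms(1) by (simp add: cinner_self)
  finally have "complex_of_real ((cmod c)\<^sup>2) = 1"
    unfolding complex_norm_square .
  then have "cmod c = 1"
    by (simp only: of_real_eq_1_iff abs_square_eq_1 abs_norm_cancel)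
  then have "exp (\<i> * complex_of_real (Arg c)) = c"
    using complex_norm_eq_1_exp_eq by blast
  then show ?thesis
    unfolding phase_class_def by (metis (mono_tags, lifting) mem_Collect_eq)
qed

lemma decompose_along_unit_vector:
  fixes \<psi>1 \<psi>2 :: "complex^'n"
  assumes "norm \<psi>1 = 1" and "norm \<psi>2 = 1" and "\<psi>1 \<notin> phase_class \<psi>2"
  obtains a b e2 where "orthonormal_pair \<psi>2 e2" and "b > 0"
    and "\<psi>1 = a *s \<psi>2 + complex_of_real b *s e2" and "(cmod a)\<^sup>2 + b\<^sup>2 = 1"
proof -
  define a where "a = cinner \<psi>1 \<psi>2"
  define w where "w = \<psi>1 - a *s \<psi>2"
  define b where "b = norm w"
  define e2 where "e2 = complex_of_real (1 / b) *s w"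
  have \<psi>2_unit: "cinner \<psi>2 \<psi>2 = 1"
    using assms(2) by (simp add: cinner_self)
  have "w \<noteq> 0"
    using assms unit_multiple_in_phase_class[of a \<psi>2] by (auto simp: w_def)
  then have b_pos: "b > 0"
    by (simp add: b_def)
  have "cinner w \<psi>2 = 0"
    by (simp add: w_def cinner_diff_left cinner_scale_left \<psi>2_unit a_def)
  moreover have "cinner w w = complex_of_real (b\<^sup>2)"
    by (simp add: b_def cinner_self)
  ultimately have pair: "orthonormal_pair \<psi>2 e2"
    using \<psi>2_unit b_pos cinner_commute[of \<psi>2 w]
    by unfold_locales (simp_all add: e2_def cinner_scale_left cinner_scale_right power2_eq_square)
  have \<psi>1_eq: "\<psi>1 = a *s \<psi>2 + complex_of_real b *s e2"
    using b_pos by (simp add: e2_def w_def vec_eq_iff)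
  have "1 = a * cnj a + complex_of_real b * cnj (complex_of_real b)"
    using assms(1)
      orthonormal_pair.cinner_combination[OF pair, of a "complex_of_real b" a "complex_of_real b"]
    by (simp add: cinner_self flip: \<psi>1_eq)
  then have "complex_of_real ((cmod a)\<^sup>2 + b\<^sup>2) = 1"
    unfolding of_real_add complex_norm_square by (simp add: power2_eq_square)
  then have "(cmod a)\<^sup>2 + b\<^sup>2 = 1"
    by (simp only: of_real_eq_1_iff)
  with that pair b_pos \<psi>1_eq show ?thesis
    by blast
qed

theorem lemma1:
  fixes \<psi>1 \<psi>2 :: "complex^'n"
  assumes "CARD('n) \<ge> 2"
    and "norm \<psi>1 = 1" and "norm \<psi>2 = 1"
    and "\<psi>1 \<notin> phase_class \<psi>2"
  shows "\<exists>\<epsilon>::real. \<exists>H :: complex^'n^'n. \<epsilon> > 0 \<and> hermitian H \<and> hs_norm H = 1 \<and> H \<noteq> mat 1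
     \<and> \<psi>1 = mat_exp (mat_scale (\<i> * complex_of_real \<epsilon>) H) *v \<psi>2
     \<and> \<not> is_eigenvector H \<psi>1 \<and> \<not> is_eigenvector H \<psi>2"
proof -
  obtain a b e2 where pair: "orthonormal_pair \<psi>2 e2" and "b > 0"
    and "\<psi>1 = a *s \<psi>2 + complex_of_real b *s e2" and "(cmod a)\<^sup>2 + b\<^sup>2 = 1"
    using decompose_along_unit_vector assms(2-4) by blast
  then obtain \<epsilon> H where "\<epsilon> > 0" "hermitian H" "hs_norm H = 1"
    and "\<psi>1 = mat_exp (mat_scale (\<i> * complex_of_real \<epsilon>) H) *v \<psi>2"
    and "\<not> is_eigenvector H \<psi>2" "\<not> is_eigenvector H \<psi>1"
    using orthonormal_pair.exists_generator_rotating_e1[OF pair] by metis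
  moreover have "is_eigenvector (mat 1) \<psi>2"
    using assms(3) by (auto simp: is_eigenvector_def intro: exI[of _ 1])
  ultimately show ?thesis
    by blast
qed

end
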